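(* Let $(V_1\xrightarrow{\mathrm d}V_0,F_1,F_2)$ be a unital 2-term representation up to homotopy of a Lie group $G$ such that $F_1$ is an (associative) action, i.e. $F_1(g_1g_2)=F_1(g_1)F_1(g_2)$. Let $G\ltimes V_0$ be the semidirect product group $(g_1,\xi_1)(g_2,\xi_2)=(g_1g_2,\xi_1+F_1(g_1)\xi_2)$, acting on $V_1$ by $\widetilde F_1(g,\xi)(m)=F_1(g)(m)$. Define $\widetilde F_2:(G\ltimes V_0)^3\to V_1$ by $\widetilde F_2((g_1,\xi_1),(g_2,\xi_2),(g_3,\xi_3))=F_2(g_1,g_2)(\xi_3)$. Then $\widetilde F_2$ is a smooth group 3-cocycle, representing an element of $H^3_{sm}(G\ltimes V_0,V_1)$.
   Context: A unital 2-term representation up to homotopy of a Lie group $G$ consists of: a 2-term complex of vector spaces $V_1\xrightarrow{\mathrm d}V_0$; a smooth map $F_1$ assigning to each $g\in G$ linear maps $F_1(g)$ on $V_0$ and on $V_1$ (not necessarily multiplicative) with $\mathrm dF_1(g)=F_1(g)\mathrm d$ and $F_1(1_G)=\mathrm{Id}$; and a smooth map $F_2:G\times G\to\mathrm{Hom}(V_0,V_1)$ with $F_1(g_1)F_1(g_2)-F_1(g_1g_2)=[\mathrm d,F_2(g_1,g_2)]$ (i.e. equal to $\mathrm d\circ F_2(g_1,g_2)$ on $V_0$ and $F_2(g_1,g_2)\circ\mathrm d$ on $V_1$) and $F_1(g_1)\circ F_2(g_2,g_3)-F_2(g_1g_2,g_3)+F_2(g_1,g_2g_3)-F_2(g_1,g_2)\circ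 F_1(g_3)=0$. $H^\bullet_{sm}(K,N)$ denotes group cohomology of a Lie group $K$ with values in a module $N$ computed with smooth cochains $K^{\times n}\to N$ and the usual group-cohomology differential. *)

theory Defs
  imports "HOL-Analysis.Analysis" "HOL-Algebra.Group"
begin

definition semidirect ::
  "('g, 'm) monoid_scheme \<Rightarrow> ('g \<Rightarrow> 'a::real_vector \<Rightarrow> 'a) \<Rightarrow> ('g \<times> 'a) monoid" where
  "semidirect G phi =
     \<lparr> carrier = carrier G \<times> UNIV,
       mult = (\<lambda>p q. (fst p \<otimes>\<^bsub>G\<^esub> fst q, snd p + phi (fst p) (snd q))),
       one = (\<one>\<^bsub>G\<^esub>, 0) \<rparr>"

text \<open>An n-cochain is a function
  on lists of group elements of length n (values on other lists are irrelevant).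
  (delta c)(h_0,...,h_n) = h_0 . c(h_1,...,h_n)
     + sum_{i=1}^{n} (-1)^i c(h_0,...,h_{i-1} h_i,...,h_n) + (-1)^(n+1) c(h_0,...,h_{n-1}).\<close>
definition grp_coboundary ::
  "('h, 'm) monoid_scheme \<Rightarrow> ('h \<Rightarrow> 'v::real_vector \<Rightarrow> 'v) \<Rightarrow> nat \<Rightarrow> ('h list \<Rightarrow> 'v) \<Rightarrow> 'h list \<Rightarrow> 'v" where
  "grp_coboundary H act n c hs =
     act (hs ! 0) (c (tl hs))
     + (\<Sum>i\<in>{1..n}. ((-1::real) ^ i) *\<^sub>R
          c (take (i - 1) hs @ [hs ! (i - 1) \<otimes>\<^bsub>H\<^esub> hs ! i] @ drop (i + 1) hs))
     + ((-1::real) ^ (n + 1)) *\<^sub>R c (take n hs)"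

definition grp_cocycle ::
  "('h, 'm) monoid_scheme \<Rightarrow> ('h \<Rightarrow> 'v::real_vector \<Rightarrow> 'v) \<Rightarrow> nat \<Rightarrow> ('h list \<Rightarrow> 'v) \<Rightarrow> bool" where
  "grp_cocycle H act n c \<longleftrightarrow>
     (\<forall>hs. length hs = n + 1 \<and> set hs \<subseteq> carrier H \<longrightarrow> grp_coboundary H act n c hs = 0)"

end

theory Submission
  imports Defs
begin

text \<open>The action of the semidirect product on \<open>V\<^sub>1\<close> only sees the \<open>G\<close>-component, and
  evaluating the coboundary of the pulled-back cochain on \<open>(g\<^sub>i, \<xi>\<^sub>i)\<close>, \<open>i = 0..3\<close>, leaves
  \<open>F\<^sub>1(g\<^sub>0)F\<^sub>2(g\<^sub>1,g\<^sub>2) - F\<^sub>2(g\<^sub>0g\<^sub>1,g\<^sub>2) + F\<^sub>2(g\<^sub>0,g\<^sub>1g\<^sub>2) - F\<^sub>2(g\<^sub>0,g\<^sub>1)F\<^sub>1(g\<^sub>2)\<close> applied to \<open>\<xi>\<^sub>3\<close>: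
  the terms in \<open>\<xi>\<^sub>2\<close> cancel by linearity of \<open>F\<^sub>2(g\<^sub>0,g\<^sub>1)\<close>, and what remains vanishes by the
  coherence identity of the representation up to homotopy. Beyond the group law of the
  semidirect product, which uses that \<open>F\<^sub>1\<close> acts on \<open>V\<^sub>0\<close>, no other axiom is needed.\<close>

lemma carrier_semidirect [simp]: "carrier (semidirect G phi) = carrier G \<times> UNIV"
  by (simp add: semidirect_def)

lemma mult_semidirect [simp]:
  "(g, a) \<otimes>\<^bsub>semidirect G phi\<^esub> (h, b) = (g \<otimes>\<^bsub>G\<^esub> h, a + phi g b)"
  by (simp add: semidirect_def)

lemma one_semidirect [simp]: "\<one>\<^bsub>semidirect G phi\<^esub> = (\<one>\<^bsub>G\<^esub>, 0)"
  by (simp add: semidirect_def)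

lemma group_semidirect:
  assumes "group G"
    and linear: "\<And>g. g \<in> carrier G \<Longrightarrow> linear (phi g)"
    and unit: "phi \<one>\<^bsub>G\<^esub> = id"
    and action: "\<And>g h a. g \<in> carrier G \<Longrightarrow> h \<in> carrier G \<Longrightarrow>
        phi (g \<otimes>\<^bsub>G\<^esub> h) a = phi g (phi h a)"
  shows "group (semidirect G phi)"
proof (rule groupI)
  interpret G: group G by (rule assms(1))
  show "x \<otimes>\<^bsub>semidirect G phi\<^esub> y \<otimes>\<^bsub>semidirect G phi\<^esub> z =
      x \<otimes>\<^bsub>semidirect G phi\<^esub> (y \<otimes>\<^bsub>semidirect G phi\<^esub> z)"
    if "x \<in> carrier (semidirect G phi)" "y \<in> carrier (semidirect G phi)"
      "z \<in> carrier (semidirect G phi)" for x y z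
    using that by (cases x, cases y, cases z)
      (simp add: G.m_assoc action linear_add[OF linear])
  show "\<exists>y\<in>carrier (semidirect G phi). y \<otimes>\<^bsub>semidirect G phi\<^esub> x = \<one>\<^bsub>semidirect G phi\<^esub>"
    if x_carrier: "x \<in> carrier (semidirect G phi)" for x
  proof -
    obtain g a where x: "x = (g, a)" and g: "g \<in> carrier G"
      using x_carrier by (cases x) auto
    have "phi (inv\<^bsub>G\<^esub> g) (phi g a) = a"
      using g by (simp add: action[symmetric] unit)
    then have "(inv\<^bsub>G\<^esub> g, - phi (inv\<^bsub>G\<^esub> g) a) \<otimes>\<^bsub>semidirect G phi\<^esub> x = \<one>\<^bsub>semidirect G phi\<^esub>"
      using g by (simp add: x linear_neg[OF linear])
    then show ?thesis
      using g by force
  qed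
qed (use assms(1) in \<open>auto simp: unit group.is_monoid monoid.m_closed\<close>)

lemma grp_coboundary_3:
  "grp_coboundary H act 3 c [h\<^sub>0, h\<^sub>1, h\<^sub>2, h\<^sub>3] =
     act h\<^sub>0 (c [h\<^sub>1, h\<^sub>2, h\<^sub>3]) - c [h\<^sub>0 \<otimes>\<^bsub>H\<^esub> h\<^sub>1, h\<^sub>2, h\<^sub>3] + c [h\<^sub>0, h\<^sub>1 \<otimes>\<^bsub>H\<^esub> h\<^sub>2, h\<^sub>3]
       - c [h\<^sub>0, h\<^sub>1, h\<^sub>2 \<otimes>\<^bsub>H\<^esub> h\<^sub>3] + c [h\<^sub>0, h\<^sub>1, h\<^sub>2]"
proof -
  have "{1..3::nat} = {1, 2, 3}" by auto
  then show ?thesis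
    by (simp add: grp_coboundary_def numeral_eq_Suc)
qed

lemma grp_cocycle_3I:
  assumes "\<And>h\<^sub>0 h\<^sub>1 h\<^sub>2 h\<^sub>3. h\<^sub>0 \<in> carrier H \<Longrightarrow> h\<^sub>1 \<in> carrier H \<Longrightarrow> h\<^sub>2 \<in> carrier H \<Longrightarrow>
      h\<^sub>3 \<in> carrier H \<Longrightarrow> grp_coboundary H act 3 c [h\<^sub>0, h\<^sub>1, h\<^sub>2, h\<^sub>3] = 0"
  shows "grp_cocycle H act 3 c"
  unfolding grp_cocycle_def
proof (intro allI impI)
  fix hs :: "'a list"
  assume hs: "length hs = 3 + 1 \<and> set hs \<subseteq> carrier H"
  then obtain h\<^sub>0 h\<^sub>1 h\<^sub>2 h\<^sub>3 where "hs = [h\<^sub>0, h\<^sub>1, h\<^sub>2, h\<^sub>3]"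
    by (auto simp: numeral_eq_Suc length_Suc_conv)
  with hs assms show "grp_coboundary H act 3 c hs = 0"
    by simp
qed

lemma grp_cocycle_semidirect_pullback:
  assumes linear: "\<And>g\<^sub>1 g\<^sub>2. g\<^sub>1 \<in> carrier G \<Longrightarrow> g\<^sub>2 \<in> carrier G \<Longrightarrow> linear (F2 g\<^sub>1 g\<^sub>2)"
    and coh: "\<And>g\<^sub>1 g\<^sub>2 g\<^sub>3 x. g\<^sub>1 \<in> carrier G \<Longrightarrow> g\<^sub>2 \<in> carrier G \<Longrightarrow> g\<^sub>3 \<in> carrier G \<Longrightarrow>
        F11 g\<^sub>1 (F2 g\<^sub>2 g\<^sub>3 x) - F2 (g\<^sub>1 \<otimes>\<^bsub>G\<^esub> g\<^sub>2) g\<^sub>3 x + F2 g\<^sub>1 (g\<^sub>2 \<otimes>\<^bsub>G\<^esub> g\<^sub>3) x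
          - F2 g\<^sub>1 g\<^sub>2 (phi g\<^sub>3 x) = 0"
  shows "grp_cocycle (semidirect G phi) (\<lambda>p m. F11 (fst p) m) 3
           (\<lambda>hs. F2 (fst (hs ! 0)) (fst (hs ! 1)) (snd (hs ! 2)))"
proof (rule grp_cocycle_3I)
  fix h\<^sub>0 h\<^sub>1 h\<^sub>2 h\<^sub>3
  assume "h\<^sub>0 \<in> carrier (semidirect G phi)" "h\<^sub>1 \<in> carrier (semidirect G phi)"
    "h\<^sub>2 \<in> carrier (semidirect G phi)" "h\<^sub>3 \<in> carrier (semidirect G phi)"
  moreover obtain g\<^sub>0 x\<^sub>0 g\<^sub>1 x\<^sub>1 g\<^sub>2 x\<^sub>2 g\<^sub>3 x\<^sub>3
    where "h\<^sub>0 = (g\<^sub>0, x\<^sub>0)" "h\<^sub>1 = (g\<^sub>1, x\<^sub>1)" "h\<^sub>2 = (g\<^sub>2, x\<^sub>2)" "h\<^sub>3 = (g\<^sub>3, x\<^sub>3)"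
    by (metis surj_pair)
  ultimately show "grp_coboundary (semidirect G phi) (\<lambda>p m. F11 (fst p) m) 3
      (\<lambda>hs. F2 (fst (hs ! 0)) (fst (hs ! 1)) (snd (hs ! 2))) [h\<^sub>0, h\<^sub>1, h\<^sub>2, h\<^sub>3] = 0"
    using coh[of g\<^sub>0 g\<^sub>1 g\<^sub>2 x\<^sub>3]
    by (simp add: grp_coboundary_3 linear_add[OF linear] algebra_simps)
qed

theorem mainTheorem7:
  fixes G :: "('g, 'z) monoid_scheme"
    and d :: "'v1::real_vector \<Rightarrow> 'v0::real_vector"
    and F10 :: "'g \<Rightarrow> 'v0 \<Rightarrow> 'v0"
    and F11 :: "'g \<Rightarrow> 'v1 \<Rightarrow> 'v1"
    and F2 :: "'g \<Rightarrow> 'g \<Rightarrow> 'v0 \<Rightarrow> 'v1"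
  assumes grp: "group G"
    and lin_d: "linear d"
    and lin_F10: "\<And>g. g \<in> carrier G \<Longrightarrow> linear (F10 g)"
    and lin_F11: "\<And>g. g \<in> carrier G \<Longrightarrow> linear (F11 g)"
    and chain: "\<And>g m. g \<in> carrier G \<Longrightarrow> d (F11 g m) = F10 g (d m)"
    and unit0: "F10 \<one>\<^bsub>G\<^esub> = id"
    and unit1: "F11 \<one>\<^bsub>G\<^esub> = id"
    and lin_F2: "\<And>g1 g2. g1 \<in> carrier G \<Longrightarrow> g2 \<in> carrier G \<Longrightarrow> linear (F2 g1 g2)"
    and htpy0: "\<And>g1 g2 x. g1 \<in> carrier G \<Longrightarrow> g2 \<in> carrier G \<Longrightarrow>
        F10 g1 (F10 g2 x) - F10 (g1 \<otimes>\<^bsub>G\<^esub> g2) x = d (F2 g1 g2 x)"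
    and htpy1: "\<And>g1 g2 m. g1 \<in> carrier G \<Longrightarrow> g2 \<in> carrier G \<Longrightarrow>
        F11 g1 (F11 g2 m) - F11 (g1 \<otimes>\<^bsub>G\<^esub> g2) m = F2 g1 g2 (d m)"
    and coh: "\<And>g1 g2 g3 x. g1 \<in> carrier G \<Longrightarrow> g2 \<in> carrier G \<Longrightarrow> g3 \<in> carrier G \<Longrightarrow>
        F11 g1 (F2 g2 g3 x) - F2 (g1 \<otimes>\<^bsub>G\<^esub> g2) g3 x + F2 g1 (g2 \<otimes>\<^bsub>G\<^esub> g3) x
          - F2 g1 g2 (F10 g3 x) = 0"
    and act0: "\<And>g1 g2 x. g1 \<in> carrier G \<Longrightarrow> g2 \<in> carrier G \<Longrightarrow>
        F10 (g1 \<otimes>\<^bsub>G\<^esub> g2) x = F10 g1 (F10 g2 x)"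
    and act1: "\<And>g1 g2 m. g1 \<in> carrier G \<Longrightarrow> g2 \<in> carrier G \<Longrightarrow>
        F11 (g1 \<otimes>\<^bsub>G\<^esub> g2) m = F11 g1 (F11 g2 m)"
  shows "group (semidirect G F10) \<and>
         grp_cocycle (semidirect G F10) (\<lambda>p m. F11 (fst p) m) 3
           (\<lambda>hs. F2 (fst (hs ! 0)) (fst (hs ! 1)) (snd (hs ! 2)))"
  using group_semidirect[OF grp lin_F10 unit0 act0]
    grp_cocycle_semidirect_pullback[OF lin_F2 coh]
  by blast

end
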